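(* Let $(X,d)$ be a complete metric space and let $T\colon X\to X$ be a mapping satisfying: (i) for every $\varepsilon>0$ there exists $\delta>0$ such that for all $x,y\in X$, $\frac{1}{2}\{d(x,Tx)+d(y,Ty)\}<\varepsilon+\delta$ implies $d(Tx,Ty)\le\varepsilon$; (ii) for all $x,y\in X$, $x\neq y$ implies $d(Tx,Ty)<\frac{1}{2}\{d(x,Tx)+d(y,Ty)\}$. Then $T$ has a unique fixed point. *)

theory Defs
  imports "HOL-Analysis.Analysis"
begin

end

theory Submission
  imports Defs
begin

text \<open>Along an orbit \<open>x\<^sub>n = T\<^sup>n x\<^sub>0\<close>, condition (ii) makes the displacements
  \<open>d\<^sub>n = d(x\<^sub>n, x\<^sub>n\<^sub>+\<^sub>1)\<close> strictly decrease, to some limit \<open>L\<close>. If \<open>L > 0\<close>, condition (i) with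
  \<open>\<epsilon> = L\<close> applied to \<open>x\<^sub>n, x\<^sub>n\<^sub>+\<^sub>1\<close> for large \<open>n\<close> forces \<open>d\<^sub>n\<^sub>+\<^sub>1 \<le> L\<close>, contradicting strict
  decrease; so \<open>d\<^sub>n \<rightarrow> 0\<close>. Then (i) with \<open>\<epsilon>/2\<close> applied to \<open>x\<^sub>m, x\<^sub>n\<close> shows the orbit is Cauchy,
  and (ii) applied to its limit \<open>z\<close> and \<open>x\<^sub>n\<close> gives \<open>d(Tz, z) \<le> d(z, Tz)/2\<close>.\<close>

lemma fixed_point_unique:
  fixes T :: "'a::metric_space \<Rightarrow> 'a"
  assumes ii: "\<And>x y. x \<noteq> y \<Longrightarrow> dist (T x) (T y) < (dist x (T x) + dist y (T y)) / 2"
    and "T x = x" "T y = y"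
  shows "x = y"
proof (rule ccontr)
  assume "x \<noteq> y"
  from ii[OF this] assms(2,3) show False by simp
qed

lemma orbit_step_dist_Suc_le:
  fixes T :: "'a::metric_space \<Rightarrow> 'a"
  assumes ii: "\<And>x y. x \<noteq> y \<Longrightarrow> dist (T x) (T y) < (dist x (T x) + dist y (T y)) / 2"
  shows "dist ((T ^^ Suc n) x) ((T ^^ Suc (Suc n)) x) \<le> dist ((T ^^ n) x) ((T ^^ Suc n) x)"
proof (cases "(T ^^ n) x = (T ^^ Suc n) x")
  case True
  then have "(T ^^ Suc n) x = (T ^^ Suc (Suc n)) x" by simp
  then show ?thesis by simp
next
  case False
  from ii[OF this] show ?thesis by (simp add: dist_commute)
qed

lemma orbit_step_dist_tendsto_0:
  fixes T :: "'a::metric_space \<Rightarrow> 'a"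
  assumes i: "\<And>\<epsilon>. \<epsilon> > 0 \<Longrightarrow> \<exists>\<delta>>0. \<forall>x y.
      (dist x (T x) + dist y (T y)) / 2 < \<epsilon> + \<delta> \<longrightarrow> dist (T x) (T y) \<le> \<epsilon>"
    and ii: "\<And>x y. x \<noteq> y \<Longrightarrow> dist (T x) (T y) < (dist x (T x) + dist y (T y)) / 2"
  shows "(\<lambda>n. dist ((T ^^ n) x) ((T ^^ Suc n) x)) \<longlonglongrightarrow> 0"
proof -
  define d where "d n = dist ((T ^^ n) x) ((T ^^ Suc n) x)" for n
  have "decseq d"
    unfolding d_def using orbit_step_dist_Suc_le[OF ii] by (intro decseq_SucI) blast
  then obtain L where lim: "d \<longlonglongrightarrow> L" and below: "\<And>n. L \<le> d n"
    using decseq_convergent[of d 0] by (auto simp: d_def)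
  have "L \<le> 0"
  proof (rule ccontr)
    assume "\<not> L \<le> 0"
    then obtain \<delta> where "\<delta> > 0" and \<delta>: "\<forall>x y. (dist x (T x) + dist y (T y)) / 2 < L + \<delta>
        \<longrightarrow> dist (T x) (T y) \<le> L"
      using i[of L] by auto
    have strict: "d (Suc n) < d n" for n
    proof -
      have "(T ^^ n) x \<noteq> (T ^^ Suc n) x"
        using below[of n] \<open>\<not> L \<le> 0\<close> by (auto simp: d_def)
      from ii[OF this] show ?thesis by (simp add: d_def dist_commute)
    qed
    obtain n where "d n < L + \<delta>"
      using order_tendstoD(2)[OF lim, of "L + \<delta>"] \<open>\<delta> > 0\<close> eventually_sequentially by auto
    with strict[of n] have "(d n + d (Suc n)) / 2 < L + \<delta>" by simp
    then have "d (Suc n) \<le> L"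
      using \<delta>[rule_format, of "(T ^^ n) x" "(T ^^ Suc n) x"] by (simp add: d_def)
    with strict[of "Suc n"] below[of "Suc (Suc n)"] show False by simp
  qed
  moreover have "L \<ge> 0"
    using LIMSEQ_le_const[OF lim] by (simp add: d_def)
  ultimately have "L = 0" by simp
  with lim show ?thesis by (simp add: d_def[abs_def])
qed

lemma orbit_Cauchy:
  fixes T :: "'a::metric_space \<Rightarrow> 'a"
  assumes i: "\<And>\<epsilon>. \<epsilon> > 0 \<Longrightarrow> \<exists>\<delta>>0. \<forall>x y.
      (dist x (T x) + dist y (T y)) / 2 < \<epsilon> + \<delta> \<longrightarrow> dist (T x) (T y) \<le> \<epsilon>"
    and step_lim: "(\<lambda>n. dist ((T ^^ n) x) ((T ^^ Suc n) x)) \<longlonglongrightarrow> 0"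
  shows "Cauchy (\<lambda>n. (T ^^ n) x)"
proof (rule metric_CauchyI)
  fix e :: real
  assume "e > 0"
  then obtain \<delta> where "\<delta> > 0" and \<delta>: "\<forall>x y. (dist x (T x) + dist y (T y)) / 2 < e / 2 + \<delta>
      \<longrightarrow> dist (T x) (T y) \<le> e / 2"
    using i[of "e / 2"] by auto
  obtain N where N: "\<And>n. n \<ge> N \<Longrightarrow> dist ((T ^^ n) x) ((T ^^ Suc n) x) < \<delta>"
    using order_tendstoD(2)[OF step_lim \<open>\<delta> > 0\<close>] by (auto simp: eventually_sequentially)
  have "dist ((T ^^ m) x) ((T ^^ n) x) < e" if "m \<ge> Suc N" "n \<ge> Suc N" for m n
  proof -
    obtain m' n' where "m = Suc m'" "n = Suc n'" "m' \<ge> N" "n' \<ge> N"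
      using \<open>m \<ge> Suc N\<close> \<open>n \<ge> Suc N\<close> by (metis Suc_le_D Suc_le_mono)
    have "dist ((T ^^ Suc m') x) ((T ^^ Suc n') x) \<le> e / 2"
      using \<delta>[rule_format, of "(T ^^ m') x" "(T ^^ n') x"] N[OF \<open>m' \<ge> N\<close>] N[OF \<open>n' \<ge> N\<close>]
        \<open>e > 0\<close> by simp
    with \<open>e > 0\<close> \<open>m = Suc m'\<close> \<open>n = Suc n'\<close> show ?thesis by simp
  qed
  then show "\<exists>M. \<forall>m\<ge>M. \<forall>n\<ge>M. dist ((T ^^ m) x) ((T ^^ n) x) < e"
    by blast
qed

lemma orbit_limit_fixed_point:
  fixes T :: "'a::metric_space \<Rightarrow> 'a"
  assumes ii: "\<And>x y. x \<noteq> y \<Longrightarrow> dist (T x) (T y) < (dist x (T x) + dist y (T y)) / 2"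
    and step_lim: "(\<lambda>n. dist ((T ^^ n) x) ((T ^^ Suc n) x)) \<longlonglongrightarrow> 0"
    and orbit_lim: "(\<lambda>n. (T ^^ n) x) \<longlonglongrightarrow> z"
  shows "T z = z"
proof -
  have bound: "dist (T z) ((T ^^ Suc n) x) \<le> (dist z (T z) + dist ((T ^^ n) x) ((T ^^ Suc n) x)) / 2"
    for n
    using ii[of z "(T ^^ n) x"] by (cases "z = (T ^^ n) x") auto
  have lhs: "(\<lambda>n. dist (T z) ((T ^^ Suc n) x)) \<longlonglongrightarrow> dist (T z) z"
    using LIMSEQ_Suc[OF orbit_lim] by (intro tendsto_intros) simp
  have rhs: "(\<lambda>n. (dist z (T z) + dist ((T ^^ n) x) ((T ^^ Suc n) x)) / 2)
      \<longlonglongrightarrow> (dist z (T z) + 0) / 2"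
    using step_lim by (intro tendsto_intros) simp_all
  have "dist (T z) z \<le> (dist z (T z) + 0) / 2"
    using LIMSEQ_le[OF lhs rhs] bound by blast
  then show ?thesis by (simp add: dist_commute)
qed

theorem theorem2p1:
  fixes T :: "'a::complete_space \<Rightarrow> 'a"
  assumes i: "\<And>\<epsilon>. \<epsilon> > 0 \<Longrightarrow> \<exists>\<delta>>0. \<forall>x y.
      (dist x (T x) + dist y (T y)) / 2 < \<epsilon> + \<delta> \<longrightarrow> dist (T x) (T y) \<le> \<epsilon>"
    and ii: "\<And>x y. x \<noteq> y \<Longrightarrow> dist (T x) (T y) < (dist x (T x) + dist y (T y)) / 2"
  shows "\<exists>!x. T x = x"
proof -
  fix x0 :: 'a
  have step_lim: "(\<lambda>n. dist ((T ^^ n) x0) ((T ^^ Suc n) x0)) \<longlonglongrightarrow> 0"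
    using orbit_step_dist_tendsto_0[OF i ii] .
  then have "Cauchy (\<lambda>n. (T ^^ n) x0)"
    using orbit_Cauchy[OF i] by blast
  then obtain z where "(\<lambda>n. (T ^^ n) x0) \<longlonglongrightarrow> z"
    using Cauchy_convergent convergent_def by blast
  with step_lim have "T z = z"
    using orbit_limit_fixed_point[OF ii] by blast
  then show ?thesis
    using fixed_point_unique[OF ii] by blast
qed

end
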